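(* Let $\Gamma\in\mathcal S$ with embedding $\varphi$. If $v_1\ne v_2$ are vertices with $\varphi(v_k)=E_{i_{v_k}}-\sum_{j\in J_{v_k}}E_j$ ($i_{v_k}\notin J_{v_k}$) for $k=1,2$, then $i_{v_1}\ne i_{v_2}$.
   Context: A plumbing tree is a finite tree $\Gamma$ each of whose vertices $v$ carries an integer decoration $d(v)$. $\Gamma$ is minimal if no vertex has decoration $-1$. For $n\ge 1$ let $(\mathbb Z^n,Q_n)$ be the lattice with basis $E_1,\dots,E_n$ and $Q_n(E_i,E_j)=-\delta_{ij}$, and let $K=\sum_{i=1}^n E_i$. A plumbing tree $\Gamma$ on $n$ vertices is a symplectic plumbing tree if there is a map $\varphi$ (an embedding) from its vertex set to $\mathbb Z^n$ such that: for distinct vertices $v_1,v_2$, $Q_n(\varphi(v_1),\varphi(v_2))$ is $1$ if they are adjacent and $0$ otherwise; $Q_n(\varphi(v),\varphi(v))=d(v)$ for every $v$; and $Q_n(\varphi(v),K)+Q_n(\varphi(v),\varphi(v))=-2$ for every $v$. $\mathcal S$ is the set of minimal, connected symplectic plumbing trees. *)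

theory Defs
  imports Main
begin

text \<open>Vectors of the lattice Z^n are modelled as functions nat => int supported
  on the index set {0..<n}; the basis vector E_i corresponds to index i-1.\<close>

definition lat_vec :: "nat \<Rightarrow> (nat \<Rightarrow> int) \<Rightarrow> bool" where
  "lat_vec n x \<longleftrightarrow> (\<forall>j\<ge>n. x j = 0)"

definition Qf :: "nat \<Rightarrow> (nat \<Rightarrow> int) \<Rightarrow> (nat \<Rightarrow> int) \<Rightarrow> int" where
  "Qf n x y = - (\<Sum>i<n. x i * y i)"

definition Ebas :: "nat \<Rightarrow> nat \<Rightarrow> int" where
  "Ebas i = (\<lambda>j. if j = i then 1 else 0)"

definition Kvec :: "nat \<Rightarrow> nat \<Rightarrow> int" where
  "Kvec n = (\<lambda>j. if j < n then 1 else 0)"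

definition is_tree :: "'v set \<Rightarrow> ('v \<Rightarrow> 'v \<Rightarrow> bool) \<Rightarrow> bool" where
  "is_tree V adj \<longleftrightarrow>
     finite V \<and> V \<noteq> {} \<and>
     (\<forall>u v. adj u v \<longrightarrow> u \<in> V \<and> v \<in> V) \<and>
     (\<forall>u v. adj u v \<longrightarrow> adj v u) \<and>
     (\<forall>u. \<not> adj u u) \<and>
     (\<forall>u\<in>V. \<forall>v\<in>V. (u, v) \<in> {(a, b). adj a b}\<^sup>*) \<and>
     \<not> (\<exists>cs. 3 \<le> length cs \<and> distinct cs \<and> set cs \<subseteq> V \<and>
            (\<forall>k. Suc k < length cs \<longrightarrow> adj (cs ! k) (cs ! Suc k)) \<and>
            adj (last cs) (hd cs))"

definition minimal_plumbing :: "'v set \<Rightarrow> ('v \<Rightarrow> int) \<Rightarrow> bool" where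
  "minimal_plumbing V d \<longleftrightarrow> (\<forall>v\<in>V. d v \<noteq> -1)"

definition symplectic_embedding ::
  "'v set \<Rightarrow> ('v \<Rightarrow> 'v \<Rightarrow> bool) \<Rightarrow> ('v \<Rightarrow> int) \<Rightarrow> ('v \<Rightarrow> nat \<Rightarrow> int) \<Rightarrow> bool" where
  "symplectic_embedding V adj d \<phi> \<longleftrightarrow>
     (let n = card V in
       (\<forall>v\<in>V. lat_vec n (\<phi> v)) \<and>
       (\<forall>v1\<in>V. \<forall>v2\<in>V. v1 \<noteq> v2 \<longrightarrow>
           Qf n (\<phi> v1) (\<phi> v2) = (if adj v1 v2 then 1 else 0)) \<and>
       (\<forall>v\<in>V. Qf n (\<phi> v) (\<phi> v) = d v) \<and>
       (\<forall>v\<in>V. Qf n (\<phi> v) (Kvec n) + Qf n (\<phi> v) (\<phi> v) = -2))"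

definition in_S :: "'v set \<Rightarrow> ('v \<Rightarrow> 'v \<Rightarrow> bool) \<Rightarrow> ('v \<Rightarrow> int) \<Rightarrow> bool" where
  "in_S V adj d \<longleftrightarrow> is_tree V adj \<and> minimal_plumbing V d \<and>
     (\<exists>\<phi>. symplectic_embedding V adj d \<phi>)"

end

theory Submission
  imports Defs
begin

text \<open>If \<open>i\<^sub>1 = i\<^sub>2\<close>, the two vectors agree in sign in every coordinate, so their
  \<open>Q\<close>-product is \<open>-(1 + |J\<^sub>1 \<inter> J\<^sub>2|) < 0\<close>; but distinct vertices have product
  \<open>0\<close> or \<open>1\<close>.\<close>

lemma sum_Ebas_apply: "finite J \<Longrightarrow> (\<Sum>j\<in>J. Ebas j x) = (if x \<in> J then 1 else 0)"
  unfolding Ebas_def by (simp add: sum.delta')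

lemma Qf_same_leading_index:
  assumes "i < n" and "J1 \<subseteq> {..<n}" and "J2 \<subseteq> {..<n}" and "i \<notin> J1" and "i \<notin> J2"
  shows "Qf n (\<lambda>x. Ebas i x - (\<Sum>j\<in>J1. Ebas j x)) (\<lambda>x. Ebas i x - (\<Sum>j\<in>J2. Ebas j x))
           = - (1 + int (card (J1 \<inter> J2)))"
proof -
  have "finite J1" "finite J2"
    using assms(2,3) finite_subset by auto
  then have product:
    "(Ebas i k - (\<Sum>j\<in>J1. Ebas j k)) * (Ebas i k - (\<Sum>j\<in>J2. Ebas j k))
       = (if k = i then 1 else 0) + (if k \<in> J1 \<inter> J2 then 1 else 0)" for k
    using assms(4,5) by (auto simp: sum_Ebas_apply Ebas_def)
  have "{..<n} \<inter> (J1 \<inter> J2) = J1 \<inter> J2"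
    using assms(2) by blast
  then have "(\<Sum>k<n. (if k = i then 1 else 0) + (if k \<in> J1 \<inter> J2 then 1 else 0 :: int))
          = 1 + int (card (J1 \<inter> J2))"
    using assms(1) by (simp add: sum.distrib sum.If_cases del: Int_iff)
  then show ?thesis
    unfolding Qf_def product by simp
qed

lemma symplectic_embedding_Qf_distinct_nonneg:
  assumes "symplectic_embedding V adj d \<phi>" and "v1 \<in> V" and "v2 \<in> V" and "v1 \<noteq> v2"
  shows "Qf (card V) (\<phi> v1) (\<phi> v2) \<ge> 0"
  using assms unfolding symplectic_embedding_def Let_def by simp

theorem lemma3p6:
  fixes V :: "'v set" and adj :: "'v \<Rightarrow> 'v \<Rightarrow> bool" and d :: "'v \<Rightarrow> int"
    and \<phi> :: "'v \<Rightarrow> nat \<Rightarrow> int"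
    and v1 v2 :: 'v and i1 i2 :: nat and J1 J2 :: "nat set"
  assumes "in_S V adj d"
    and "symplectic_embedding V adj d \<phi>"
    and "v1 \<in> V" and "v2 \<in> V" and "v1 \<noteq> v2"
    and "i1 < card V" and "J1 \<subseteq> {..<card V}" and "i1 \<notin> J1"
    and "i2 < card V" and "J2 \<subseteq> {..<card V}" and "i2 \<notin> J2"
    and "\<phi> v1 = (\<lambda>x. Ebas i1 x - (\<Sum>j\<in>J1. Ebas j x))"
    and "\<phi> v2 = (\<lambda>x. Ebas i2 x - (\<Sum>j\<in>J2. Ebas j x))"
  shows "i1 \<noteq> i2"
proof
  assume "i1 = i2"
  then have "Qf (card V) (\<phi> v1) (\<phi> v2) < 0"
    using assms(6-13) Qf_same_leading_index by simp
  with symplectic_embedding_Qf_distinct_nonneg[OF assms(2-5)] show False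
    by simp
qed

end
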